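(* Let $\rho<r<1$. If $\mathcal{D},\mathcal{D}'\in\mathcal{M}$ and $\lambda,\lambda'>0$ satisfy $\mathcal{R}_r\mathcal{D}=\lambda\mathcal{D}$ and $\mathcal{R}_r\mathcal{D}'=\lambda'\mathcal{D}'$, then $\lambda=\lambda'$.
   Context: Let $q_0=(\tfrac12,\tfrac{\sqrt3}{2})$, $q_1=(0,0)$, $q_2=(1,0)$, $\rho=\frac{\sqrt5-1}{2}$, $F_0(x)=\rho^2(x-q_0)+q_0$, $F_1(x)=\rho(x-q_1)+q_1$, $F_2(x)=\rho(x-q_2)+q_2$. For a finite word $w$ over $\{0,1,2\}$, $|w|$ is its length and $F_w=F_{w_1}\circ\cdots\circ F_{w_{|w|}}$. $W_1$ is a set of words of the form $w_1\cdots w_n0$ ($n\ge0$, $w_i\in\{1,2\}$) containing exactly one word for each distinct map $F_w$ of this form. $V_0=\{q_0,q_1,q_2\}$, $V_1=\bigcup_{w\in W_1}F_wV_0$, $\bar V_1$ its closure. $\mathcal{M}$ is the set of forms $\mathcal{D}(f,g)=\frac12\sum_{i,j}a_{ij}(f(q_i)-f(q_j))(g(q_i)-g(q_j))$ on functions on $V_0$ with $(a_{ij})$ symmetric, $a_{ii}=0$, $a_{ij}\ge0$ and irreducible. $\Psi_r\mathcal{D}(f,g)=\sum_{w\in W_1}r^{-|w|+1}\mathcal{D}(f\circ F_w,g\circ F_w)$ on $\mathrm{Dom}(\Psi_r\mathcal{D})=\{f:V_1\to\mathbb{R}:\Psi_r\mathcal{D}(f,f)<\infty\}$, and for $\rho<r<1$,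 $\mathcal{R}_r\mathcal{D}(u)=\inf\{\Psi_r\mathcal{D}(f):f\in\mathrm{Dom}(\Psi_r\mathcal{D}),f|_{V_0}=u\}$ for $u:V_0\to\mathbb{R}$. *)

theory Defs
  imports "HOL-Analysis.Analysis"
begin

text \<open>Points of the plane are modelled as complex numbers.\<close>

definition rho :: real where "rho = (sqrt 5 - 1) / 2"

definition q :: "nat \<Rightarrow> complex" where
  "q i = (if i = 0 then Complex (1/2) (sqrt 3 / 2) else if i = 1 then 0 else 1)"

definition Fi :: "nat \<Rightarrow> complex \<Rightarrow> complex" where
  "Fi i x = complex_of_real (if i = 0 then rho^2 else rho) * (x - q i) + q i"

definition Fw :: "nat list \<Rightarrow> complex \<Rightarrow> complex" where
  "Fw w = foldr (\<lambda>i g. Fi i \<circ> g) w id"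

definition V0 :: "complex set" where "V0 = {q 0, q 1, q 2}"

definition words0 :: "nat list set" where
  "words0 = {w @ [0] | w. set w \<subseteq> {1, 2}}"

definition is_W1 :: "nat list set \<Rightarrow> bool" where
  "is_W1 W \<longleftrightarrow> W \<subseteq> words0 \<and> (\<forall>w\<in>words0. \<exists>!v. v \<in> W \<and> Fw v = Fw w)"

definition V1 :: "nat list set \<Rightarrow> complex set" where
  "V1 W = (\<Union>w\<in>W. Fw w ` V0)"

definition form_of :: "(nat \<Rightarrow> nat \<Rightarrow> real) \<Rightarrow> (complex \<Rightarrow> real) \<Rightarrow> (complex \<Rightarrow> real) \<Rightarrow> real" where
  "form_of a f g = 1/2 * (\<Sum>i<3. \<Sum>j<3. a i j * (f (q i) - f (q j)) * (g (q i) - g (q j)))"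

definition irreducible3 :: "(nat \<Rightarrow> nat \<Rightarrow> real) \<Rightarrow> bool" where
  "irreducible3 a \<longleftrightarrow> (\<forall>i<3. \<forall>j<3. i \<noteq> j \<longrightarrow>
      (i, j) \<in> {(k, l). k < 3 \<and> l < 3 \<and> a k l > 0}\<^sup>+)"

definition M :: "((complex \<Rightarrow> real) \<Rightarrow> (complex \<Rightarrow> real) \<Rightarrow> real) set" where
  "M = {form_of a | a. (\<forall>i<3. \<forall>j<3. a i j = a j i) \<and> (\<forall>i<3. a i i = 0)
          \<and> (\<forall>i<3. \<forall>j<3. a i j \<ge> 0) \<and> irreducible3 a}"

definition Psi_term :: "real \<Rightarrow> ((complex \<Rightarrow> real) \<Rightarrow> (complex \<Rightarrow> real) \<Rightarrow> real)
    \<Rightarrow> (complex \<Rightarrow> real) \<Rightarrow> nat list \<Rightarrow> real" where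
  "Psi_term r D f w = r powi (1 - int (length w)) * D (f \<circ> Fw w) (f \<circ> Fw w)"

definition Psi :: "nat list set \<Rightarrow> real \<Rightarrow> ((complex \<Rightarrow> real) \<Rightarrow> (complex \<Rightarrow> real) \<Rightarrow> real)
    \<Rightarrow> (complex \<Rightarrow> real) \<Rightarrow> real" where
  "Psi W r D f = (\<Sum>\<^sub>\<infinity>w\<in>W. Psi_term r D f w)"

text \<open>Dom(Psi_r D): finite energy (terms are nonnegative, so this is Psi_r D(f) < infinity).
  The restriction f|V0 is understood via the continuous extension to the closure of V1.\<close>
definition in_Dom :: "nat list set \<Rightarrow> real \<Rightarrow> ((complex \<Rightarrow> real) \<Rightarrow> (complex \<Rightarrow> real) \<Rightarrow> real)
    \<Rightarrow> (complex \<Rightarrow> real) \<Rightarrow> bool" where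
  "in_Dom W r D f \<longleftrightarrow> Psi_term r D f summable_on W \<and> continuous_on (closure (V1 W)) f"

definition RR :: "nat list set \<Rightarrow> real \<Rightarrow> ((complex \<Rightarrow> real) \<Rightarrow> (complex \<Rightarrow> real) \<Rightarrow> real)
    \<Rightarrow> (complex \<Rightarrow> real) \<Rightarrow> ereal" where
  "RR W r D u = (INF f \<in> {f. in_Dom W r D f \<and> (\<forall>x\<in>V0. f x = u x)}. ereal (Psi W r D f))"

end

theory Submission
  imports Defs
begin

text \<open>The renormalization map \<open>RR W r\<close> is monotone and positively homogeneous in the form,
  and any two irreducible forms on \<open>V0\<close> are comparable, \<open>D \<le> K D'\<close>. If \<open>\<lambda>' < \<lambda>\<close>,
  applying \<open>RR\<close> \<open>n\<close> times to \<open>D \<le> K D'\<close> gives \<open>D \<le> K (\<lambda>'/\<lambda>)\<^sup>n D'\<close>, which forces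
  \<open>D = 0\<close>; but a form in \<open>M\<close> is not identically zero.\<close>

lemma rho_pos: "rho > 0"
proof -
  have "sqrt 5 > sqrt 1" by (subst real_sqrt_less_iff) simp
  then show ?thesis unfolding rho_def by simp
qed

lemma RR_le_scaled:
  assumes r: "r > 0" and nonneg: "\<And>g. 0 \<le> D g g" and k: "k > 0"
    and le: "\<And>g. D g g \<le> k * D' g g"
    and A: "RR W r D u = ereal A" and B: "RR W r D' u = ereal B"
  shows "A \<le> k * B"
proof -
  have "ereal (A / k) \<le> RR W r D' u"
    unfolding RR_def
  proof (rule INF_greatest)
    fix f assume "f \<in> {f. in_Dom W r D' f \<and> (\<forall>x\<in>V0. f x = u x)}"
    then have dom: "in_Dom W r D' f" and agree: "\<forall>x\<in>V0. f x = u x" by auto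
    have weight_pos: "r powi (1 - int (length w)) > 0" for w using r by simp
    have term_le: "Psi_term r D f w \<le> k * Psi_term r D' f w" for w
      unfolding Psi_term_def using weight_pos[of w] le
      by (metis mult.left_commute mult_left_mono less_imp_le)
    have term_nonneg: "0 \<le> Psi_term r D f w" for w
      unfolding Psi_term_def using weight_pos[of w] nonneg by simp
    have summable_scaled: "(\<lambda>w. k * Psi_term r D' f w) summable_on W"
      using dom unfolding in_Dom_def by (simp add: summable_on_cmult_right)
    have summable: "Psi_term r D f summable_on W"
      by (rule summable_on_comparison_test[OF summable_scaled]) (use term_le term_nonneg in auto)
    have "in_Dom W r D f" using dom summable unfolding in_Dom_def by simp
    then have "RR W r D u \<le> ereal (Psi W r D f)"
      unfolding RR_def using agree by (intro INF_lower) auto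
    then have "A \<le> Psi W r D f" using A by simp
    also have "Psi W r D f \<le> (\<Sum>\<^sub>\<infinity>w\<in>W. k * Psi_term r D' f w)"
      unfolding Psi_def by (rule infsum_mono[OF summable summable_scaled]) (use term_le in auto)
    also have "\<dots> = k * Psi W r D' f"
      unfolding Psi_def by (rule infsum_cmult_right')
    finally have "A / k \<le> Psi W r D' f" using k by (simp add: field_simps mult.commute)
    then show "ereal (A / k) \<le> ereal (Psi W r D' f)" by simp
  qed
  then have "A / k \<le> B" using B by simp
  then show ?thesis using k by (simp add: field_simps mult.commute)
qed

lemma form_of_diag:
  assumes sym: "\<forall>i<3. \<forall>j<3. a i j = a j i" and diag: "\<forall>i<3. a i i = 0"
  shows "form_of a g g = a 0 1 * (g (q 0) - g (q 1))^2 + a 0 2 * (g (q 0) - g (q 2))^2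
            + a 1 2 * (g (q 1) - g (q 2))^2"
proof -
  have "a 1 0 = a 0 1" "a 2 0 = a 0 2" "a 2 1 = a 1 2" "a 0 0 = 0" "a 1 1 = 0" "a 2 2 = 0"
    using sym diag by auto
  moreover have "{..<3::nat} = {0,1,2}" by auto
  ultimately show ?thesis unfolding form_of_def
    by (simp add: power2_eq_square algebra_simps)
qed

lemma irreducible3_out_edge:
  assumes irr: "irreducible3 a" and i: "i < 3"
  obtains j where "j < 3" "a i j > 0"
proof -
  let ?E = "{(k, l). k < 3 \<and> l < 3 \<and> a k l > 0}"
  have "(i + 1) mod 3 < 3" "i \<noteq> (i + 1) mod 3" using i by presburger+
  then have "(i, (i + 1) mod 3) \<in> ?E\<^sup>+"
    using irr i unfolding irreducible3_def by blast
  then obtain j where "(i, j) \<in> ?E" by (rule converse_tranclE) blast+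
  then show ?thesis using that by blast
qed

lemma irreducible3_two_positive:
  assumes sym: "\<forall>i<3. \<forall>j<3. a i j = a j i" and diag: "\<forall>i<3. a i i = 0"
    and irr: "irreducible3 a"
  shows "(a 0 1 > 0 \<or> a 0 2 > 0) \<and> (a 0 1 > 0 \<or> a 1 2 > 0) \<and> (a 0 2 > 0 \<or> a 1 2 > 0)"
proof -
  have a: "a 1 0 = a 0 1" "a 2 0 = a 0 2" "a 2 1 = a 1 2" "a 0 0 = 0" "a 1 1 = 0" "a 2 2 = 0"
    using sym diag by auto
  have below_3: "j < 3 \<Longrightarrow> j = 0 \<or> j = 1 \<or> j = (2::nat)" for j by auto
  obtain j0 where "j0 < 3" "a 0 j0 > 0" using irreducible3_out_edge[OF irr, of 0] by auto
  then have "a 0 1 > 0 \<or> a 0 2 > 0" using below_3[of j0] a by auto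
  moreover obtain j1 where "j1 < 3" "a 1 j1 > 0" using irreducible3_out_edge[OF irr, of 1] by auto
  then have "a 0 1 > 0 \<or> a 1 2 > 0" using below_3[of j1] a by auto
  moreover obtain j2 where "j2 < 3" "a 2 j2 > 0" using irreducible3_out_edge[OF irr, of 2] by auto
  then have "a 0 2 > 0 \<or> a 1 2 > 0" using below_3[of j2] a by auto
  ultimately show ?thesis by blast
qed

lemma M_coefficientsE:
  assumes "D \<in> M"
  obtains c01 c02 c12 :: real
  where "\<And>g. D g g = c01 * (g (q 0) - g (q 1))^2 + c02 * (g (q 0) - g (q 2))^2
            + c12 * (g (q 1) - g (q 2))^2"
    and "c01 \<ge> 0" "c02 \<ge> 0" "c12 \<ge> 0"
    and "(c01 > 0 \<or> c02 > 0) \<and> (c01 > 0 \<or> c12 > 0) \<and> (c02 > 0 \<or> c12 > 0)"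
proof -
  obtain a where "D = form_of a" and sym: "\<forall>i<3. \<forall>j<3. a i j = a j i"
    and diag: "\<forall>i<3. a i i = 0" and "\<forall>i<3. \<forall>j<3. a i j \<ge> 0" and "irreducible3 a"
    using assms unfolding M_def by blast
  then show ?thesis
    using that[of "a 0 1" "a 0 2" "a 1 2"] form_of_diag[OF sym diag]
      irreducible3_two_positive[OF sym diag] by auto
qed

lemma M_nonneg: "D \<in> M \<Longrightarrow> 0 \<le> D g g"
  by (erule M_coefficientsE) simp

lemma M_nontrivial:
  assumes "D \<in> M"
  obtains u where "D u u > 0"
proof -
  obtain c01 c02 c12 where D: "\<And>g. D g g = c01 * (g (q 0) - g (q 1))^2
      + c02 * (g (q 0) - g (q 2))^2 + c12 * (g (q 1) - g (q 2))^2"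
    and "c01 \<ge> 0" "c02 \<ge> 0" "c01 > 0 \<or> c02 > 0"
    using M_coefficientsE[OF assms] by metis
  moreover have "q 0 \<noteq> q 1" "q 0 \<noteq> q 2" "q 1 \<noteq> q 2"
    unfolding q_def by (auto simp: complex_eq_iff)
  ultimately have "D (\<lambda>x. if x = q 0 then 1 else 0) (\<lambda>x. if x = q 0 then 1 else 0) > 0"
    by auto
  then show ?thesis by (rule that)
qed

lemma power2_diff_triangle: "((x::real) - z)^2 \<le> 2 * (x - y)^2 + 2 * (y - z)^2"
proof -
  have "0 \<le> (x - 2 * y + z)^2" by simp
  then show ?thesis by (simp add: power2_eq_square algebra_simps)
qed

lemma sum3_le_weighted:
  fixes e1 e2 e3 y1 y2 y3 :: real
  assumes "e1 > 0" "e2 > 0" "e3 \<ge> 0" "y1 \<ge> 0" "y2 \<ge> 0" "y3 \<ge> 0" "y3 \<le> 2 * y1 + 2 * y2"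
  shows "y1 + y2 + y3 \<le> 3 / min e1 e2 * (e1 * y1 + e2 * y2 + e3 * y3)"
proof -
  let ?m = "min e1 e2"
  have m: "?m > 0" using assms by simp
  have "?m * (y1 + y2) \<le> e1 * y1 + e2 * y2 + e3 * y3"
    using assms mult_right_mono[of ?m e1 y1] mult_right_mono[of ?m e2 y2]
    by (simp add: distrib_left add_mono add_increasing2)
  then have "3 * (y1 + y2) \<le> 3 / ?m * (e1 * y1 + e2 * y2 + e3 * y3)"
    using m by (simp add: field_simps)
  moreover have "y1 + y2 + y3 \<le> 3 * (y1 + y2)" using assms by simp
  ultimately show ?thesis by linarith
qed

text \<open>The squared differences of three reals satisfy a triangle inequality up to the factor 2,
  so any two of them with positive weight control the third.\<close>

lemma sq_diffs_le_weighted: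
  fixes c01 c02 c12 :: real
  assumes "c01 \<ge> 0" "c02 \<ge> 0" "c12 \<ge> 0"
    and "(c01 > 0 \<or> c02 > 0) \<and> (c01 > 0 \<or> c12 > 0) \<and> (c02 > 0 \<or> c12 > 0)"
  obtains K where "K > 0" and "\<And>x0 x1 x2 :: real. (x0 - x1)^2 + (x0 - x2)^2 + (x1 - x2)^2
             \<le> K * (c01 * (x0 - x1)^2 + c02 * (x0 - x2)^2 + c12 * (x1 - x2)^2)"
proof -
  have tri12: "(x1 - x2)^2 \<le> 2 * (x0 - x1)^2 + 2 * (x0 - x2)^2" for x0 x1 x2 :: real
    using power2_diff_triangle[where x = x1 and y = x0 and z = x2] power2_commute[of x1 x0] by linarith
  have tri02: "(x0 - x2)^2 \<le> 2 * (x0 - x1)^2 + 2 * (x1 - x2)^2" for x0 x1 x2 :: real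
    using power2_diff_triangle[where x = x0 and y = x1 and z = x2] by linarith
  have tri01: "(x0 - x1)^2 \<le> 2 * (x0 - x2)^2 + 2 * (x1 - x2)^2" for x0 x1 x2 :: real
    using power2_diff_triangle[where x = x0 and y = x2 and z = x1] power2_commute[of x2 x1] by linarith
  consider "c01 > 0" "c02 > 0" | "c01 > 0" "c12 > 0" | "c02 > 0" "c12 > 0"
    using assms(4) by blast
  then show ?thesis
  proof cases
    case 1
    show ?thesis
    proof (rule that[of "3 / min c01 c02"])
      fix x0 x1 x2 :: real
      show "(x0 - x1)^2 + (x0 - x2)^2 + (x1 - x2)^2
          \<le> 3 / min c01 c02 * (c01 * (x0 - x1)^2 + c02 * (x0 - x2)^2 + c12 * (x1 - x2)^2)"
        using sum3_le_weighted[of c01 c02 c12] tri12 1 assms by simp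
    qed (use 1 in simp)
  next
    case 2
    show ?thesis
    proof (rule that[of "3 / min c01 c12"])
      fix x0 x1 x2 :: real
      show "(x0 - x1)^2 + (x0 - x2)^2 + (x1 - x2)^2
          \<le> 3 / min c01 c12 * (c01 * (x0 - x1)^2 + c02 * (x0 - x2)^2 + c12 * (x1 - x2)^2)"
        using sum3_le_weighted[of c01 c12 c02 "(x0 - x1)^2" "(x1 - x2)^2" "(x0 - x2)^2"]
          tri02 2 assms by (simp add: algebra_simps)
    qed (use 2 in simp)
  next
    case 3
    show ?thesis
    proof (rule that[of "3 / min c02 c12"])
      fix x0 x1 x2 :: real
      show "(x0 - x1)^2 + (x0 - x2)^2 + (x1 - x2)^2
          \<le> 3 / min c02 c12 * (c01 * (x0 - x1)^2 + c02 * (x0 - x2)^2 + c12 * (x1 - x2)^2)"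
        using sum3_le_weighted[of c02 c12 c01 "(x0 - x2)^2" "(x1 - x2)^2" "(x0 - x1)^2"]
          tri01 3 assms by (simp add: algebra_simps)
    qed (use 3 in simp)
  qed
qed

lemma M_comparable:
  assumes "D \<in> M" "D' \<in> M"
  obtains K where "K > 0" and "\<And>g. D g g \<le> K * D' g g"
proof -
  obtain a01 a02 a12 where D: "\<And>g. D g g = a01 * (g (q 0) - g (q 1))^2
      + a02 * (g (q 0) - g (q 2))^2 + a12 * (g (q 1) - g (q 2))^2"
    and a: "a01 \<ge> 0" "a02 \<ge> 0" "a12 \<ge> 0"
    using M_coefficientsE[OF assms(1)] by metis
  obtain b01 b02 b12 where D': "\<And>g. D' g g = b01 * (g (q 0) - g (q 1))^2
      + b02 * (g (q 0) - g (q 2))^2 + b12 * (g (q 1) - g (q 2))^2"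
    and b: "b01 \<ge> 0" "b02 \<ge> 0" "b12 \<ge> 0"
      "(b01 > 0 \<or> b02 > 0) \<and> (b01 > 0 \<or> b12 > 0) \<and> (b02 > 0 \<or> b12 > 0)"
    using M_coefficientsE[OF assms(2)] by metis
  obtain K where K: "K > 0" and D'_bound: "\<And>x0 x1 x2 :: real. (x0 - x1)^2 + (x0 - x2)^2 + (x1 - x2)^2
             \<le> K * (b01 * (x0 - x1)^2 + b02 * (x0 - x2)^2 + b12 * (x1 - x2)^2)"
    using sq_diffs_le_weighted[OF b] by blast
  define S where "S = a01 + a02 + a12 + 1"
  have S: "S > 0" "a01 \<le> S" "a02 \<le> S" "a12 \<le> S" using a unfolding S_def by auto
  show ?thesis
  proof (rule that[of "S * K"])
    fix g :: "complex \<Rightarrow> real"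
    define x0 x1 x2 where "x0 = g (q 0)" and "x1 = g (q 1)" and "x2 = g (q 2)"
    have "D g g = a01 * (x0 - x1)^2 + a02 * (x0 - x2)^2 + a12 * (x1 - x2)^2"
      unfolding D x0_def x1_def x2_def ..
    also have "\<dots> \<le> S * ((x0 - x1)^2 + (x0 - x2)^2 + (x1 - x2)^2)"
      using S mult_right_mono[of a01 S "(x0 - x1)^2"] mult_right_mono[of a02 S "(x0 - x2)^2"]
        mult_right_mono[of a12 S "(x1 - x2)^2"]
      by (simp add: distrib_left)
    also have "\<dots> \<le> S * (K * (b01 * (x0 - x1)^2 + b02 * (x0 - x2)^2 + b12 * (x1 - x2)^2))"
      using D'_bound S by (intro mult_left_mono) auto
    also have "\<dots> = S * K * D' g g"
      unfolding D' x0_def x1_def x2_def by simp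
    finally show "D g g \<le> S * K * D' g g" .
  qed (use S K in simp)
qed

lemma RR_eigenvalue_le:
  assumes r: "r > 0" and "D \<in> M" "D' \<in> M" and lam: "lam > 0" and "lam' > 0"
    and eig: "\<forall>u. RR W r D u = ereal (lam * D u u)"
    and eig': "\<forall>u. RR W r D' u = ereal (lam' * D' u u)"
  shows "lam \<le> lam'"
proof (rule ccontr)
  assume "\<not> lam \<le> lam'"
  define t where "t = lam' / lam"
  have t: "0 < t" "t < 1"
    using \<open>\<not> lam \<le> lam'\<close> lam \<open>lam' > 0\<close> unfolding t_def by auto
  obtain K where K: "K > 0" and comparable: "\<And>g. D g g \<le> K * D' g g"
    using M_comparable[OF \<open>D \<in> M\<close> \<open>D' \<in> M\<close>] by blast
  have contracted: "D g g \<le> K * t^n * D' g g" for n g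
  proof (induction n arbitrary: g)
    case 0
    show ?case using comparable by simp
  next
    case (Suc n)
    have "lam * D g g \<le> K * t^n * (lam' * D' g g)"
      using RR_le_scaled[OF r _ _ Suc eig[rule_format] eig'[rule_format]]
        M_nonneg[OF \<open>D \<in> M\<close>] K t by simp
    then show ?case unfolding t_def using lam by (simp add: field_simps)
  qed
  obtain u where u: "D u u > 0" using M_nontrivial[OF \<open>D \<in> M\<close>] .
  have "D' u u > 0"
  proof (rule ccontr)
    assume "\<not> D' u u > 0"
    then have "K * D' u u \<le> 0" using K by (simp add: mult_nonneg_nonpos)
    then show False using contracted[of u 0] u by simp
  qed
  then obtain n where "t^n < D u u / (K * D' u u)"
    using real_arch_pow_inv[of "D u u / (K * D' u u)" t] u K t by auto
  then have "K * t^n * D' u u < D u u" using K \<open>D' u u > 0\<close> by (simp add: field_simps)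
  then show False using contracted[of u n] by simp
qed

theorem lemma5p2:
  fixes r lam lam' :: real and W1 :: "nat list set"
    and D D' :: "(complex \<Rightarrow> real) \<Rightarrow> (complex \<Rightarrow> real) \<Rightarrow> real"
  assumes "rho < r" and "r < 1"
    and "is_W1 W1"
    and "D \<in> M" and "D' \<in> M"
    and "lam > 0" and "lam' > 0"
    and "\<forall>u. RR W1 r D u = ereal (lam * D u u)"
    and "\<forall>u. RR W1 r D' u = ereal (lam' * D' u u)"
  shows "lam = lam'"
proof -
  have r: "r > 0" using \<open>rho < r\<close> rho_pos by simp
  have "lam \<le> lam'" using RR_eigenvalue_le[OF r assms(4-9)] .
  moreover have "lam' \<le> lam" using RR_eigenvalue_le[OF r assms(5,4,7,6,9,8)] .
  ultimately show ?thesis by simp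
qed

end
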